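(* Let $t\ge 4$ and let $K_{t,t}^{-}$ be the graph obtained from the complete bipartite graph $K_{t,t}$ by removing one edge. In a Waiter-Client game, by offering edges of $K_{t,t}^-$ only, Waiter can force a red perfect matching of $K_{t,t}^{-}$ within $t+1$ rounds.
   Context: Waiter-Client game: in each round Waiter offers two free edges of the board, Client colors one of them red and the other becomes blue. *)

theory Defs
  imports Main
begin

text \<open>In each round
Waiter offers two distinct free edges of the board (free = neither red nor blue);
Client colours one of them red, the other one becomes blue.
\<open>waiter_forces board goal n R B\<close>: starting from red set R and blue set B,
Waiter can guarantee that the red set satisfies \<open>goal\<close> after at most n more
rounds, whatever Client does.\<close>

fun waiter_forces ::
  "'e set \<Rightarrow> ('e set \<Rightarrow> bool) \<Rightarrow> nat \<Rightarrow> 'e set \<Rightarrow> 'e set \<Rightarrow> bool" where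
  "waiter_forces board goal 0 R B = goal R"
| "waiter_forces board goal (Suc n) R B =
     (goal R \<or>
      (\<exists>e1 e2. e1 \<in> board \<and> e2 \<in> board \<and> e1 \<noteq> e2 \<and>
         e1 \<notin> R \<union> B \<and> e2 \<notin> R \<union> B \<and>
         waiter_forces board goal n (insert e1 R) (insert e2 B) \<and>
         waiter_forces board goal n (insert e2 R) (insert e1 B)))"

text \<open>The bipartite graph K_{t,t}: left vertices 0..t-1, right vertices 0..t-1;
the edge (i,j) joins left vertex i with right vertex j.  K_{t,t}^- is obtained
by removing the edge (0,0).\<close>

definition Ktt_minus :: "nat \<Rightarrow> (nat \<times> nat) set" where
  "Ktt_minus t = {(i, j). i < t \<and> j < t \<and> (i, j) \<noteq> (0, 0)}"

definition perfect_matching :: "nat \<Rightarrow> (nat \<times> nat) set \<Rightarrow> (nat \<times> nat) set \<Rightarrow> bool" where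
  "perfect_matching t G M \<longleftrightarrow> M \<subseteq> G \<and>
     (\<forall>i<t. \<exists>!j. (i, j) \<in> M) \<and> (\<forall>j<t. \<exists>!i. (i, j) \<in> M)"

end

theory Submission
  imports Defs
begin

text \<open>Let (x0, y0) be the missing edge. As long as the board is larger than K_{4,4}^-, Waiter
offers two edges (x, y1), (x, y2) with x \<noteq> x0 and y1, y2 \<noteq> y0: the red one joins the
matching and what remains is K_{t-1,t-1}^- with all its edges untouched. On K_{4,4}^- five
rounds suffice thanks to flexible vertices: a vertex with red edges to both v and w can be
matched to whichever of v, w the rest of the matching leaves uncovered, so Waiter may offer
v and w against each other to a third vertex. Waiter first gives x0 a red edge (x0, p), then
offers (x0, r) against (a, y0): either x0 becomes flexible, or (a, y0) is red and the game
moves to a K_{3,3} on which a is then made flexible.\<close>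

lemma waiter_forces_SucI:
  assumes "e \<in> board - (R \<union> B)" "e' \<in> board - (R \<union> B)" "e \<noteq> e'"
    and "waiter_forces board goal n (insert e R) (insert e' B)"
    and "waiter_forces board goal n (insert e' R) (insert e B)"
  shows "waiter_forces board goal (Suc n) R B"
  using assms by auto

lemma waiter_forces_if_goal: "goal R \<Longrightarrow> waiter_forces board goal n R B"
  by (cases n) auto

lemma waiter_forces_mono:
  assumes "waiter_forces board goal n R B"
    and "\<And>S. R \<subseteq> S \<Longrightarrow> S \<subseteq> R \<union> board \<Longrightarrow> goal S \<Longrightarrow> goal' S"
  shows "waiter_forces board goal' n R B"
  using assms
proof (induction n arbitrary: R B)
  case 0
  then show ?case by simp
next
  case (Suc n)
  show ?case
  proof (cases "goal R")
    case True
    then show ?thesis using Suc.prems(2) by simp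
  next
    case False
    then obtain e1 e2 where e: "e1 \<in> board" "e2 \<in> board" "e1 \<noteq> e2" "e1 \<notin> R \<union> B" "e2 \<notin> R \<union> B"
      and play1: "waiter_forces board goal n (insert e1 R) (insert e2 B)"
      and play2: "waiter_forces board goal n (insert e2 R) (insert e1 B)"
      using Suc.prems(1) by auto
    have lift: "waiter_forces board goal' n (insert e R) B'"
      if "e \<in> board" "waiter_forces board goal n (insert e R) B'" for e B'
    proof (rule Suc.IH)
      fix S assume "insert e R \<subseteq> S" "S \<subseteq> insert e R \<union> board" "goal S"
      then show "goal' S" using \<open>e \<in> board\<close> by (intro Suc.prems(2)) auto
    qed (fact that(2))
    have "waiter_forces board goal' n (insert e1 R) (insert e2 B)"
      "waiter_forces board goal' n (insert e2 R) (insert e1 B)"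
      using lift e(1,2) play1 play2 by simp_all
    with e show ?thesis by (intro waiter_forces_SucI) simp_all
  qed
qed

text \<open>From here on rounds are played only through waiter_forces_SucI; letting simp unfold them
makes the strategy proofs below blow up.\<close>

declare waiter_forces.simps(2) [simp del]

definition is_perfect_matching :: "'a set \<Rightarrow> 'b set \<Rightarrow> ('a \<times> 'b) set \<Rightarrow> bool" where
  "is_perfect_matching X Y M \<longleftrightarrow>
     M \<subseteq> X \<times> Y \<and> (\<forall>x\<in>X. \<exists>!y. (x, y) \<in> M) \<and> (\<forall>y\<in>Y. \<exists>!x. (x, y) \<in> M)"

definition has_perfect_matching :: "'a set \<Rightarrow> 'b set \<Rightarrow> ('a \<times> 'b) set \<Rightarrow> bool" where
  "has_perfect_matching X Y S \<longleftrightarrow> (\<exists>M \<subseteq> S. is_perfect_matching X Y M)"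

lemma is_perfect_matching_insert:
  assumes M: "is_perfect_matching X Y M" and "x \<notin> X" "y \<notin> Y"
  shows "is_perfect_matching (insert x X) (insert y Y) (insert (x, y) M)"
proof -
  have sub: "M \<subseteq> X \<times> Y" and left: "\<forall>u\<in>X. \<exists>!v. (u, v) \<in> M" and right: "\<forall>v\<in>Y. \<exists>!u. (u, v) \<in> M"
    using M unfolding is_perfect_matching_def by blast+
  have no_x: "(x, v) \<notin> M" and no_y: "(u, y) \<notin> M" for u v
    using sub assms(2,3) by blast+
  show ?thesis
    unfolding is_perfect_matching_def
  proof (intro conjI ballI)
    show "insert (x, y) M \<subseteq> insert x X \<times> insert y Y"
      using sub by blast
  next
    fix u assume "u \<in> insert x X"
    then show "\<exists>!v. (u, v) \<in> insert (x, y) M"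
      using left no_x by (cases "u = x") auto
  next
    fix v assume "v \<in> insert y Y"
    then show "\<exists>!u. (u, v) \<in> insert (x, y) M"
      using right no_y by (cases "v = y") auto
  qed
qed

lemma has_perfect_matching_empty: "has_perfect_matching {} {} S"
  unfolding has_perfect_matching_def is_perfect_matching_def by auto

lemma has_perfect_matching_insert:
  assumes "has_perfect_matching X Y S" "(x, y) \<in> S" "x \<notin> X" "y \<notin> Y"
  shows "has_perfect_matching (insert x X) (insert y Y) S"
proof -
  obtain M where "M \<subseteq> S" "is_perfect_matching X Y M"
    using assms(1) unfolding has_perfect_matching_def by blast
  then show ?thesis
    unfolding has_perfect_matching_def
    using assms(2-) is_perfect_matching_insert by (intro exI[of _ "insert (x, y) M"]) simp
qed

lemma waiter_forces_perfect_matching_insert: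
  assumes "waiter_forces board (has_perfect_matching X Y) n R B"
    and "(x, y) \<in> R" "x \<notin> X" "y \<notin> Y"
  shows "waiter_forces board (has_perfect_matching (insert x X) (insert y Y)) n R B"
  using assms(1)
proof (rule waiter_forces_mono)
  fix S assume "R \<subseteq> S" "has_perfect_matching X Y S"
  then show "has_perfect_matching (insert x X) (insert y Y) S"
    using assms(2-) by (intro has_perfect_matching_insert) auto
qed

lemma waiter_forces_pm_2x2_flexible:
  assumes "(u, v) \<in> R" "(u, w) \<in> R" "u \<noteq> u'" "v \<noteq> w"
    and "{(u', v), (u', w)} \<subseteq> board - (R \<union> B)"
  shows "waiter_forces board (has_perfect_matching {u, u'} {v, w}) (Suc n) R B"
proof -
  have branch: "waiter_forces board (has_perfect_matching {u, u'} {v, w}) n (insert (u', z) R) B'"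
    if "z = v \<and> z' = w \<or> z = w \<and> z' = v" for z z' B'
  proof (rule waiter_forces_if_goal)
    have "has_perfect_matching {u', u} {z, z'} (insert (u', z) R)"
      by (rule has_perfect_matching_insert[OF has_perfect_matching_insert[OF has_perfect_matching_empty]])
        (use assms(1-4) that in auto)
    then show "has_perfect_matching {u, u'} {v, w} (insert (u', z) R)"
      using that by (auto simp: insert_commute)
  qed
  show ?thesis
    by (rule waiter_forces_SucI[where e = "(u', v)" and e' = "(u', w)"])
      (use assms(4,5) branch[of v w] branch[of w v] in auto)
qed

lemma waiter_forces_pm_3x3_flexible:
  assumes "(u, v) \<in> R" "(u, w) \<in> R" "distinct [u, a, c]" "distinct [v, w, q]"
    and "{a, c} \<times> {v, w, q} \<subseteq> board - (R \<union> B)"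
  shows "waiter_forces board (has_perfect_matching {u, a, c} {v, w, q}) (Suc (Suc n)) R B"
proof -
  have free: "(x, y) \<in> board - (R \<union> B)" if "x \<in> {a, c}" "y \<in> {v, w, q}" for x y
    using assms(5) that by blast
  have branch: "waiter_forces board (has_perfect_matching {u, a, c} {v, w, q}) (Suc n)
      (insert (x, q) R) (insert (x', q) B)"
    if "x = a \<and> x' = c \<or> x = c \<and> x' = a" for x x'
  proof -
    have "waiter_forces board (has_perfect_matching {u, x'} {v, w}) (Suc n)
        (insert (x, q) R) (insert (x', q) B)"
      by (rule waiter_forces_pm_2x2_flexible) (use assms(1-4) that free[of x' v] free[of x' w] in auto)
    then have "waiter_forces board (has_perfect_matching (insert x {u, x'}) (insert q {v, w})) (Suc n)
        (insert (x, q) R) (insert (x', q) B)"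
      by (rule waiter_forces_perfect_matching_insert) (use assms(3,4) that in auto)
    moreover have "insert x {u, x'} = {u, a, c}" "insert q {v, w} = {v, w, q}"
      using that by auto
    ultimately show ?thesis by simp
  qed
  show ?thesis
    by (rule waiter_forces_SucI[where e = "(a, q)" and e' = "(c, q)"])
      (use assms(3) free branch[of a c] branch[of c a] in auto)
qed

lemma waiter_forces_pm_3x3_one_red:
  assumes "(a, v) \<in> R" "distinct [a, b, c]" "distinct [v, q, r]"
    and "{(a, q), (a, r)} \<union> {b, c} \<times> {v, q, r} \<subseteq> board - (R \<union> B)"
  shows "waiter_forces board (has_perfect_matching {a, b, c} {v, q, r}) (Suc (Suc (Suc n))) R B"
proof -
  have branch: "waiter_forces board (has_perfect_matching {a, b, c} {v, q, r}) (Suc (Suc n))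
      (insert (a, s) R) (insert (a, s') B)"
    if "s = q \<and> s' = r \<or> s = r \<and> s' = q" for s s'
  proof -
    have "waiter_forces board (has_perfect_matching {a, b, c} {v, s, s'}) (Suc (Suc n))
        (insert (a, s) R) (insert (a, s') B)"
      by (rule waiter_forces_pm_3x3_flexible) (use assms that in auto)
    moreover have "{v, s, s'} = {v, q, r}"
      using that by auto
    ultimately show ?thesis by simp
  qed
  show ?thesis
    by (rule waiter_forces_SucI[where e = "(a, q)" and e' = "(a, r)"])
      (use assms(3,4) branch[of q r] branch[of r q] in auto)
qed

lemma waiter_forces_pm_4x4_flexible:
  assumes "(x0, p) \<in> R" "(x0, r) \<in> R" "distinct [x0, a, b, c]" "distinct [y0, p, q, r]"
    and "{b, c} \<times> {y0} \<union> {a, b, c} \<times> {p, q, r} \<subseteq> board - (R \<union> B)"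
  shows "waiter_forces board (has_perfect_matching {x0, a, b, c} {y0, p, q, r}) (Suc (Suc (Suc n))) R B"
proof -
  have branch: "waiter_forces board (has_perfect_matching {x0, a, b, c} {y0, p, q, r}) (Suc (Suc n))
      (insert (x, y0) R) (insert (x', y0) B)"
    if "x = b \<and> x' = c \<or> x = c \<and> x' = b" for x x'
  proof -
    have "waiter_forces board (has_perfect_matching {x0, a, x'} {p, r, q}) (Suc (Suc n))
        (insert (x, y0) R) (insert (x', y0) B)"
      by (rule waiter_forces_pm_3x3_flexible) (use assms that in auto)
    then have "waiter_forces board (has_perfect_matching (insert x {x0, a, x'}) (insert y0 {p, r, q}))
        (Suc (Suc n)) (insert (x, y0) R) (insert (x', y0) B)"
      by (rule waiter_forces_perfect_matching_insert) (use assms(3,4) that in auto)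
    moreover have "insert x {x0, a, x'} = {x0, a, b, c}" "insert y0 {p, r, q} = {y0, p, q, r}"
      using that by auto
    ultimately show ?thesis by simp
  qed
  show ?thesis
    by (rule waiter_forces_SucI[where e = "(b, y0)" and e' = "(c, y0)"])
      (use assms(3,5) branch[of b c] branch[of c b] in auto)
qed

lemma waiter_forces_pm_4x4_one_red:
  assumes "(x0, p) \<in> R" "distinct [x0, a, b, c]" "distinct [y0, p, q, r]"
    and "{(x0, r)} \<union> {a, b, c} \<times> {y0, p, q, r} \<subseteq> board - (R \<union> B)"
  shows "waiter_forces board (has_perfect_matching {x0, a, b, c} {y0, p, q, r})
    (Suc (Suc (Suc (Suc n)))) R B"
proof -
  have flexible: "waiter_forces board (has_perfect_matching {x0, a, b, c} {y0, p, q, r})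
      (Suc (Suc (Suc n))) (insert (x0, r) R) (insert (a, y0) B)"
    by (rule waiter_forces_pm_4x4_flexible) (use assms in auto)
  have "waiter_forces board (has_perfect_matching {a, b, c} {y0, q, r})
      (Suc (Suc (Suc n))) (insert (a, y0) R) (insert (x0, r) B)"
    by (rule waiter_forces_pm_3x3_one_red) (use assms in auto)
  then have "waiter_forces board (has_perfect_matching (insert x0 {a, b, c}) (insert p {y0, q, r}))
      (Suc (Suc (Suc n))) (insert (a, y0) R) (insert (x0, r) B)"
    by (rule waiter_forces_perfect_matching_insert) (use assms(1-3) in auto)
  moreover have "insert p {y0, q, r} = {y0, p, q, r}"
    by auto
  ultimately have one_red: "waiter_forces board (has_perfect_matching {x0, a, b, c} {y0, p, q, r})
      (Suc (Suc (Suc n))) (insert (a, y0) R) (insert (x0, r) B)"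
    by simp
  show ?thesis
    by (rule waiter_forces_SucI[where e = "(x0, r)" and e' = "(a, y0)"])
      (use assms(2,4) flexible one_red in auto)
qed

lemma waiter_forces_pm_4x4_minus:
  assumes "distinct [x0, a, b, c]" "distinct [y0, p, q, r]"
    and "{x0, a, b, c} \<times> {y0, p, q, r} - {(x0, y0)} \<subseteq> board - (R \<union> B)"
  shows "waiter_forces board (has_perfect_matching {x0, a, b, c} {y0, p, q, r})
    (Suc (Suc (Suc (Suc (Suc n))))) R B"
proof -
  have branch: "waiter_forces board (has_perfect_matching {x0, a, b, c} {y0, p, q, r})
      (Suc (Suc (Suc (Suc n)))) (insert (x0, s) R) (insert (x0, s') B)"
    if "s = p \<and> s' = q \<or> s = q \<and> s' = p" for s s'
  proof -
    have "waiter_forces board (has_perfect_matching {x0, a, b, c} {y0, s, s', r})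
        (Suc (Suc (Suc (Suc n)))) (insert (x0, s) R) (insert (x0, s') B)"
      by (rule waiter_forces_pm_4x4_one_red) (use assms that in auto)
    moreover have "{y0, s, s', r} = {y0, p, q, r}"
      using that by auto
    ultimately show ?thesis by simp
  qed
  show ?thesis
    by (rule waiter_forces_SucI[where e = "(x0, p)" and e' = "(x0, q)"])
      (use assms branch[of p q] branch[of q p] in auto)
qed

lemma waiter_forces_pm_star:
  assumes "x \<in> X" "y1 \<in> Y" "y2 \<in> Y" "y1 \<noteq> y2" "{(x, y1), (x, y2)} \<subseteq> board - (R \<union> B)"
    and "\<And>y y'. y = y1 \<and> y' = y2 \<or> y = y2 \<and> y' = y1 \<Longrightarrow>
      waiter_forces board (has_perfect_matching (X - {x}) (Y - {y})) n (insert (x, y) R) (insert (x, y') B)"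
  shows "waiter_forces board (has_perfect_matching X Y) (Suc n) R B"
proof -
  have branch: "waiter_forces board (has_perfect_matching X Y) n (insert (x, y) R) (insert (x, y') B)"
    if "y = y1 \<and> y' = y2 \<or> y = y2 \<and> y' = y1" for y y'
  proof -
    have "waiter_forces board (has_perfect_matching (insert x (X - {x})) (insert y (Y - {y})))
        n (insert (x, y) R) (insert (x, y') B)"
      by (rule waiter_forces_perfect_matching_insert[OF assms(6)[OF that]]) simp_all
    moreover have "insert x (X - {x}) = X" "insert y (Y - {y}) = Y"
      using assms(1-3) that by auto
    ultimately show ?thesis by simp
  qed
  show ?thesis
    by (rule waiter_forces_SucI[where e = "(x, y1)" and e' = "(x, y2)"])
      (use assms(4,5) branch[of y1 y2] branch[of y2 y1] in auto)
qed

lemma card_eq_4_obtain: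
  assumes "card X = 4" "x \<in> X"
  obtains a b c where "X = {x, a, b, c}" "distinct [x, a, b, c]"
proof -
  have "finite X"
    using assms(1) by (simp add: card_ge_0_finite)
  then have "card (X - {x}) = 3"
    using assms by simp
  then obtain a b c where abc: "X - {x} = {a, b, c}" "a \<noteq> b" "b \<noteq> c" "a \<noteq> c"
    by (auto simp: card_3_iff)
  then have "X = {x, a, b, c}" "distinct [x, a, b, c]"
    using assms(2) by auto
  then show thesis by (rule that)
qed

lemma waiter_forces_pm_complete_bipartite_minus:
  assumes "card X = k" "card Y = k" "4 \<le> k" "x0 \<in> X" "y0 \<in> Y"
    and "X \<times> Y - {(x0, y0)} \<subseteq> board - (R \<union> B)"
  shows "waiter_forces board (has_perfect_matching X Y) (k + 1) R B"
  using assms(3,1,2,4-)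
proof (induction k arbitrary: X Y R B rule: nat_induct_at_least)
  case base
  obtain a b c where X: "X = {x0, a, b, c}" "distinct [x0, a, b, c]"
    using base.prems(1,3) by (rule card_eq_4_obtain)
  obtain p q r where Y: "Y = {y0, p, q, r}" "distinct [y0, p, q, r]"
    using base.prems(2,4) by (rule card_eq_4_obtain)
  have "waiter_forces board (has_perfect_matching X Y) (Suc (Suc (Suc (Suc (Suc 0))))) R B"
    unfolding X(1) Y(1) by (rule waiter_forces_pm_4x4_minus) (use X Y base.prems(5) in auto)
  then show ?case by (simp add: numeral_eq_Suc)
next
  case (Suc k)
  have "finite X" "finite Y"
    using Suc.prems(1,2) Suc.hyps by (auto simp: card_ge_0_finite)
  then have "0 < card (X - {x0})" "0 < card (Y - {y0})"
    using Suc.prems(1-4) Suc.hyps by simp_all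
  then obtain x y1 where x: "x \<in> X" "x \<noteq> x0" and y1: "y1 \<in> Y" "y1 \<noteq> y0"
    by (auto simp: card_gt_0_iff)
  have "0 < card (Y - {y0} - {y1})"
    using Suc.prems(2,4) Suc.hyps \<open>finite Y\<close> y1 by simp
  then obtain y2 where y2: "y2 \<in> Y" "y2 \<noteq> y0" "y2 \<noteq> y1"
    by (auto simp: card_gt_0_iff)
  have "waiter_forces board (has_perfect_matching X Y) (Suc (k + 1)) R B"
  proof (rule waiter_forces_pm_star)
    fix y y' assume "y = y1 \<and> y' = y2 \<or> y = y2 \<and> y' = y1"
    then have y: "y \<in> Y" "y \<noteq> y0"
      using y1 y2 by auto
    show "waiter_forces board (has_perfect_matching (X - {x}) (Y - {y})) (k + 1)
        (insert (x, y) R) (insert (x, y') B)"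
    proof (rule Suc.IH)
      show "card (X - {x}) = k" "card (Y - {y}) = k"
        using Suc.prems(1,2) \<open>finite X\<close> \<open>finite Y\<close> x y by simp_all
      show "x0 \<in> X - {x}" "y0 \<in> Y - {y}"
        using Suc.prems(3,4) x y by auto
      show "(X - {x}) \<times> (Y - {y}) - {(x0, y0)} \<subseteq> board - (insert (x, y) R \<union> insert (x, y') B)"
        using Suc.prems(5) by auto
    qed
  qed (use Suc.prems(5) x y1 y2 in auto)
  then show ?case
    by simp
qed

theorem lemma3p3:
  fixes t :: nat
  assumes "t \<ge> 4"
  shows "waiter_forces (Ktt_minus t)
           (\<lambda>R. \<exists>M \<subseteq> R. perfect_matching t (Ktt_minus t) M)
           (t + 1) {} {}"
proof -
  have "waiter_forces (Ktt_minus t) (has_perfect_matching {..<t} {..<t}) (t + 1) {} {}"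
    by (rule waiter_forces_pm_complete_bipartite_minus[of _ t _ 0 0])
      (use assms in \<open>auto simp: Ktt_minus_def\<close>)
  then show ?thesis
  proof (rule waiter_forces_mono)
    fix S assume "S \<subseteq> {} \<union> Ktt_minus t" "has_perfect_matching {..<t} {..<t} S"
    then obtain M where "M \<subseteq> S" "M \<subseteq> Ktt_minus t" "is_perfect_matching {..<t} {..<t} M"
      unfolding has_perfect_matching_def by blast
    then have "perfect_matching t (Ktt_minus t) M"
      unfolding is_perfect_matching_def perfect_matching_def by simp
    with \<open>M \<subseteq> S\<close> show "\<exists>M \<subseteq> S. perfect_matching t (Ktt_minus t) M"
      by blast
  qed
qed

end
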